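(* Let $H$ be a digraph (possibly with loops) and let $D$ be an $H$-colored quasi-transitive digraph such that every directed $3$-cycle of $D$ is an $H$-cycle. For every $k \geq 2$, $D$ has a $(k,H)$-kernel.
   Context: All digraphs are finite. A digraph $D$ is quasi-transitive if for all distinct $u,v\in V(D)$, whenever there is a directed $uv$-path of length $2$, $u$ and $v$ are joined by an arc (in some direction). $D$ has no loops and comes with a map $\rho: A(D)\to V(H)$. For a walk $W=(x_0,\ldots,x_n)$ in $D$, there is an obstruction on $x_i$ if $(\rho(x_{i-1},x_i),\rho(x_i,x_{i+1})) \notin A(H)$; for an open walk this is considered at internal vertices $x_i$, $1\le i\le n-1$, for a closed walk at all $i\in\{0,\ldots,n-1\}$ with indices modulo $n$. $O_H(W)$ is the set of indices with an obstruction; the $H$-length is $l_H(W)=|O_H(W)|+1$ for open $W$ and $|O_H(W)|$ for closed $W$. An $H$-cycle is a directed cycle with no obstructions. A $(k,H)$-kernel ($k\ge2$) is a set $S\subseteq V(D)$ such that for every two distinct $u,v\in S$ every directed $uv$-path in $D$ has $H$-length at least $k$, and for every $x\in V(D)\setminus S$ there is a directed path from $x$ to a vertex of $S$ of $H$-length at most $k-1$. *)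

theory Defs
  imports Main
begin

definition digraph :: "'a set \<Rightarrow> ('a \<times> 'a) set \<Rightarrow> bool" where
  "digraph V A \<longleftrightarrow> finite V \<and> A \<subseteq> V \<times> V"

definition loopless :: "('a \<times> 'a) set \<Rightarrow> bool" where
  "loopless A \<longleftrightarrow> (\<forall>x. (x, x) \<notin> A)"

definition dpath :: "('a \<times> 'a) set \<Rightarrow> 'a list \<Rightarrow> bool" where
  "dpath A xs \<longleftrightarrow> xs \<noteq> [] \<and> distinct xs \<and>
     (\<forall>i. Suc i < length xs \<longrightarrow> (xs ! i, xs ! Suc i) \<in> A)"

(* directed cycle (x_0,...,x_{n-1},x_0) given by the list [x_0,...,x_{n-1}] *)
definition dcycle :: "('a \<times> 'a) set \<Rightarrow> 'a list \<Rightarrow> bool" where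
  "dcycle A xs \<longleftrightarrow> 2 \<le> length xs \<and> distinct xs \<and>
     (\<forall>i < length xs. (xs ! i, xs ! ((i + 1) mod length xs)) \<in> A)"

definition quasi_transitive :: "('a \<times> 'a) set \<Rightarrow> bool" where
  "quasi_transitive A \<longleftrightarrow>
     (\<forall>u v w. u \<noteq> v \<and> (u, w) \<in> A \<and> (w, v) \<in> A \<longrightarrow> (u, v) \<in> A \<or> (v, u) \<in> A)"

definition obs_open :: "('b \<times> 'b) set \<Rightarrow> ('a \<times> 'a \<Rightarrow> 'b) \<Rightarrow> 'a list \<Rightarrow> nat set" where
  "obs_open AH \<rho> xs = {i. 1 \<le> i \<and> i + 1 < length xs \<and>
       (\<rho> (xs ! (i - 1), xs ! i), \<rho> (xs ! i, xs ! (i + 1))) \<notin> AH}"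

definition H_length_open :: "('b \<times> 'b) set \<Rightarrow> ('a \<times> 'a \<Rightarrow> 'b) \<Rightarrow> 'a list \<Rightarrow> nat" where
  "H_length_open AH \<rho> xs = card (obs_open AH \<rho> xs) + 1"

definition obs_closed :: "('b \<times> 'b) set \<Rightarrow> ('a \<times> 'a \<Rightarrow> 'b) \<Rightarrow> 'a list \<Rightarrow> nat set" where
  "obs_closed AH \<rho> xs = (let n = length xs in {i. i < n \<and>
       (\<rho> (xs ! ((i + n - 1) mod n), xs ! i), \<rho> (xs ! i, xs ! ((i + 1) mod n))) \<notin> AH})"

definition H_cycle :: "('a \<times> 'a) set \<Rightarrow> ('b \<times> 'b) set \<Rightarrow> ('a \<times> 'a \<Rightarrow> 'b) \<Rightarrow> 'a list \<Rightarrow> bool" where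
  "H_cycle A AH \<rho> xs \<longleftrightarrow> dcycle A xs \<and> obs_closed AH \<rho> xs = {}"

definition kH_kernel :: "'a set \<Rightarrow> ('a \<times> 'a) set \<Rightarrow> ('b \<times> 'b) set \<Rightarrow> ('a \<times> 'a \<Rightarrow> 'b)
     \<Rightarrow> nat \<Rightarrow> 'a set \<Rightarrow> bool" where
  "kH_kernel V A AH \<rho> k S \<longleftrightarrow> S \<subseteq> V \<and>
     (\<forall>u\<in>S. \<forall>v\<in>S. u \<noteq> v \<longrightarrow>
        (\<forall>xs. dpath A xs \<and> hd xs = u \<and> last xs = v \<longrightarrow> k \<le> H_length_open AH \<rho> xs)) \<and>
     (\<forall>x \<in> V - S. \<exists>xs. dpath A xs \<and> hd xs = x \<and> last xs \<in> S \<and>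
        H_length_open AH \<rho> xs \<le> k - 1)"

end

theory Submission
  imports Defs
begin

text \<open>A shortest walk between two vertices of a quasi-transitive digraph is a path without
  forward chords, so any three consecutive vertices x, y, z on it carry the arcs (x,y), (y,z) and,
  by quasi-transitivity, (z,x). This 3-cycle is an H-cycle, so the walk has no obstruction at y:
  reachability already implies reachability by a path of H-length 1. Hence one representative
  of each terminal strong component forms a (k,H)-kernel for every k \<ge> 2; there is not even a
  path between two distinct representatives.\<close>

definition walk :: "('a \<times> 'a) set \<Rightarrow> 'a list \<Rightarrow> bool" where
  "walk A xs \<longleftrightarrow> xs \<noteq> [] \<and> successively (\<lambda>x y. (x, y) \<in> A) xs"

lemma dpath_iff_walk_distinct: "dpath A xs \<longleftrightarrow> walk A xs \<and> distinct xs"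
  by (auto simp: dpath_def walk_def successively_conv_nth)

lemma walk_nth: "walk A xs \<Longrightarrow> Suc i < length xs \<Longrightarrow> (xs ! i, xs ! Suc i) \<in> A"
  unfolding walk_def using successively_nth[of "\<lambda>x y. (x, y) \<in> A"] by blast

lemma walk_imp_rtrancl: "walk A xs \<Longrightarrow> (hd xs, last xs) \<in> A\<^sup>*"
proof (induction xs)
  case (Cons x xs)
  then show ?case
    by (cases xs) (auto simp: walk_def intro: converse_rtrancl_into_rtrancl)
qed (simp add: walk_def)

lemma rtrancl_imp_walk: "(u, v) \<in> A\<^sup>* \<Longrightarrow> \<exists>xs. walk A xs \<and> hd xs = u \<and> last xs = v"
proof (induction rule: rtrancl_induct)
  case base
  show ?case by (rule exI[of _ "[u]"]) (simp add: walk_def)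
next
  case (step y z)
  then obtain xs where "walk A xs" "hd xs = u" "last xs = y" by blast
  with step.hyps(2) show ?case
    by (intro exI[of _ "xs @ [z]"]) (auto simp: walk_def successively_append_iff)
qed

lemma walk_take_drop:
  assumes "walk A xs" "i \<le> j" "j < length xs" "i = 0 \<or> (xs ! (i - 1), xs ! j) \<in> A"
  shows "walk A (take i xs @ drop j xs)"
proof -
  let ?P = "\<lambda>x y. (x, y) \<in> A"
  have "successively ?P (take i xs @ drop i xs)" "successively ?P (take j xs @ drop j xs)"
    using assms(1) by (simp_all add: walk_def)
  then have "successively ?P (take i xs)" "successively ?P (drop j xs)"
    by (simp_all only: successively_append_iff)
  moreover have "last (take i xs) = xs ! (i - 1)" if "i > 0"
    using that assms(2,3) by (cases i) (simp_all add: take_Suc_conv_app_nth)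
  ultimately show ?thesis
    using assms(2-4) by (auto simp: walk_def successively_append_iff hd_drop_conv_nth)
qed

definition shortest_walk :: "('a \<times> 'a) set \<Rightarrow> 'a list \<Rightarrow> bool" where
  "shortest_walk A xs \<longleftrightarrow> walk A xs \<and>
     (\<forall>ys. walk A ys \<and> hd ys = hd xs \<and> last ys = last xs \<longrightarrow> length xs \<le> length ys)"

lemma rtrancl_imp_shortest_walk:
  assumes "(u, v) \<in> A\<^sup>*"
  obtains xs where "shortest_walk A xs" "hd xs = u" "last xs = v"
proof -
  let ?P = "\<lambda>xs. walk A xs \<and> hd xs = u \<and> last xs = v"
  obtain xs0 where "?P xs0" using rtrancl_imp_walk[OF assms] by blast
  then obtain xs where "?P xs" "\<And>ys. ?P ys \<Longrightarrow> length xs \<le> length ys"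
    using ex_has_least_nat[of ?P xs0 length] by blast
  then show thesis using that by (auto simp: shortest_walk_def)
qed

lemma shortest_walk_no_shortcut:
  assumes "shortest_walk A xs" "i < j" "j < length xs" "i = 0 \<or> (xs ! (i - 1), xs ! j) \<in> A"
    and "i = 0 \<Longrightarrow> xs ! j = hd xs"
  shows False
proof -
  let ?ys = "take i xs @ drop j xs"
  have "walk A ?ys" using assms(1-4) walk_take_drop[of A xs i j] by (simp add: shortest_walk_def)
  moreover have "hd ?ys = hd xs"
    using assms(2,3,5) by (cases "i = 0") (auto simp: hd_drop_conv_nth hd_append)
  moreover have "last ?ys = last xs" using assms(3) by simp
  ultimately have "length xs \<le> length ?ys" using assms(1) unfolding shortest_walk_def by blast
  then show False using assms(2,3) by simp
qed

lemma shortest_walk_distinct: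
  assumes "shortest_walk A xs"
  shows "distinct xs"
proof (rule ccontr)
  assume "\<not> distinct xs"
  then obtain i j where ij: "i < j" "j < length xs" "xs ! i = xs ! j"
    unfolding distinct_conv_nth by (metis linorder_neqE_nat)
  have "i = 0 \<or> (xs ! (i - 1), xs ! j) \<in> A"
    using assms ij walk_nth[of A xs "i - 1"] by (cases i) (auto simp: shortest_walk_def)
  moreover have "i = 0 \<Longrightarrow> xs ! j = hd xs" using ij by (cases xs) auto
  ultimately show False using shortest_walk_no_shortcut[OF assms ij(1,2)] by blast
qed

lemma shortest_walk_no_chord:
  assumes "shortest_walk A xs" "Suc i < j" "j < length xs"
  shows "(xs ! i, xs ! j) \<notin> A"
  using shortest_walk_no_shortcut[OF assms(1), of "Suc i" j] assms(2,3) by auto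

lemma dcycle3I:
  assumes "distinct [a, b, c]" "(a, b) \<in> A" "(b, c) \<in> A" "(c, a) \<in> A"
  shows "dcycle A [a, b, c]"
  unfolding dcycle_def
proof (intro conjI allI impI)
  fix i assume "i < length [a, b, c]"
  then have "i = 0 \<or> i = 1 \<or> i = 2" by auto
  then show "([a, b, c] ! i, [a, b, c] ! ((i + 1) mod length [a, b, c])) \<in> A"
    using assms by auto
qed (use assms in auto)

lemma H_cycle3_middle_transition:
  assumes "H_cycle A AH \<rho> [a, b, c]"
  shows "(\<rho> (a, b), \<rho> (b, c)) \<in> AH"
proof -
  have "1 \<notin> obs_closed AH \<rho> [a, b, c]" using assms by (simp add: H_cycle_def)
  then show ?thesis by (simp add: obs_closed_def)
qed

lemma shortest_walk_obstruction_free: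
  assumes qt: "quasi_transitive A"
    and triangles: "\<forall>xs. dcycle A xs \<and> length xs = 3 \<longrightarrow> H_cycle A AH \<rho> xs"
    and sw: "shortest_walk A xs"
  shows "obs_open AH \<rho> xs = {}"
proof (rule ccontr)
  assume "obs_open AH \<rho> xs \<noteq> {}"
  then obtain m where "m \<in> obs_open AH \<rho> xs" by blast
  then obtain i where i: "i + 2 < length xs"
    and bad: "(\<rho> (xs ! i, xs ! Suc i), \<rho> (xs ! Suc i, xs ! (i + 2))) \<notin> AH"
    unfolding obs_open_def by (intro that[of "m - 1"]) auto
  let ?x = "xs ! i" and ?y = "xs ! Suc i" and ?z = "xs ! (i + 2)"
  have walk: "walk A xs" and dist: "distinct xs"
    using sw shortest_walk_distinct by (auto simp: shortest_walk_def)
  have "(?x, ?y) \<in> A" "(?y, ?z) \<in> A" using walk_nth[OF walk] i by simp_all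
  moreover have "?x \<noteq> ?z" "(?x, ?z) \<notin> A"
    using dist i shortest_walk_no_chord[OF sw, of i "i + 2"] by (simp_all add: nth_eq_iff_index_eq)
  ultimately have "(?z, ?x) \<in> A" using qt unfolding quasi_transitive_def by blast
  moreover have "distinct [?x, ?y, ?z]" using dist i by (simp add: nth_eq_iff_index_eq)
  ultimately have "dcycle A [?x, ?y, ?z]"
    using \<open>(?x, ?y) \<in> A\<close> \<open>(?y, ?z) \<in> A\<close> by (simp add: dcycle3I)
  then have "(\<rho> (?x, ?y), \<rho> (?y, ?z)) \<in> AH"
    using triangles H_cycle3_middle_transition by fastforce
  with bad show False by simp
qed

lemma rtrancl_imp_obstruction_free_path:
  assumes "quasi_transitive A"
    and "\<forall>xs. dcycle A xs \<and> length xs = 3 \<longrightarrow> H_cycle A AH \<rho> xs"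
    and "(u, v) \<in> A\<^sup>*"
  obtains xs where "dpath A xs" "hd xs = u" "last xs = v" "H_length_open AH \<rho> xs = 1"
proof -
  obtain xs where sw: "shortest_walk A xs" and ends: "hd xs = u" "last xs = v"
    using rtrancl_imp_shortest_walk[OF assms(3)] .
  have "dpath A xs"
    using sw shortest_walk_distinct by (simp add: dpath_iff_walk_distinct shortest_walk_def)
  moreover have "H_length_open AH \<rho> xs = 1"
    using shortest_walk_obstruction_free[OF assms(1,2) sw] by (simp add: H_length_open_def)
  ultimately show thesis using that ends by blast
qed

definition terminal_vertex :: "('a \<times> 'a) set \<Rightarrow> 'a \<Rightarrow> bool" where
  "terminal_vertex A t \<longleftrightarrow> (\<forall>z. (t, z) \<in> A\<^sup>* \<longrightarrow> (z, t) \<in> A\<^sup>*)"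

lemma reaches_terminal_vertex:
  assumes "finite A"
  obtains t where "(x, t) \<in> A\<^sup>*" "terminal_vertex A t"
proof -
  let ?succ = "\<lambda>y. A\<^sup>* `` {y}"
  obtain t where xt: "(x, t) \<in> A\<^sup>*"
    and least: "\<And>y. (x, y) \<in> A\<^sup>* \<Longrightarrow> card (?succ t) \<le> card (?succ y)"
    using ex_has_least_nat[of "\<lambda>y. (x, y) \<in> A\<^sup>*" x "\<lambda>y. card (?succ y)"] by blast
  have "(z, t) \<in> A\<^sup>*" if tz: "(t, z) \<in> A\<^sup>*" for z
  proof -
    have sub: "?succ z \<subseteq> ?succ t" using tz by (auto intro: rtrancl_trans)
    have "card (?succ t) \<le> card (?succ z)" using xt tz by (intro least) (rule rtrancl_trans)
    moreover have "finite (?succ t)" using assms by simp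
    ultimately have "?succ z = ?succ t" using sub by (metis card_mono card_subset_eq le_antisym)
    then show ?thesis by auto
  qed
  then show thesis using that xt by (simp add: terminal_vertex_def)
qed

lemma rtrancl_closed:
  assumes "A \<subseteq> V \<times> V" "(x, y) \<in> A\<^sup>*" "x \<in> V"
  shows "y \<in> V"
  using assms(2,3,1) by (induction rule: rtrancl_induct) auto

lemma reachability_kernel_exists:
  assumes "finite A" "A \<subseteq> V \<times> V"
  obtains S where "S \<subseteq> V" "\<And>u v. u \<in> S \<Longrightarrow> v \<in> S \<Longrightarrow> (u, v) \<in> A\<^sup>* \<Longrightarrow> u = v"
    "\<And>x. x \<in> V \<Longrightarrow> \<exists>s\<in>S. (x, s) \<in> A\<^sup>*"
proof -
  let ?mutual = "\<lambda>y z. (y, z) \<in> A\<^sup>* \<and> (z, y) \<in> A\<^sup>*"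
  define rep where "rep y = (SOME z. ?mutual y z)" for y
  have rep_mutual: "?mutual y (rep y)" for y
    unfolding rep_def by (rule someI[of _ y]) simp
  have rep_eq: "rep a = rep b" if "?mutual a b" for a b
  proof -
    have "?mutual a = ?mutual b" using that by (auto intro: rtrancl_trans)
    then show ?thesis by (simp add: rep_def)
  qed
  define S where "S = rep ` {t \<in> V. terminal_vertex A t}"
  show thesis
  proof
    show "S \<subseteq> V" using rep_mutual rtrancl_closed[OF assms(2)] by (auto simp: S_def)
  next
    fix u v assume "u \<in> S" "v \<in> S" and uv: "(u, v) \<in> A\<^sup>*"
    then obtain a b where a: "terminal_vertex A a" "u = rep a" and b: "v = rep b"
      by (auto simp: S_def)
    have "(a, b) \<in> A\<^sup>*"
      using rep_mutual[of a] rep_mutual[of b] uv a(2) b by (blast intro: rtrancl_trans)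
    with a(1) have "?mutual a b" by (simp add: terminal_vertex_def)
    then show "u = v" using a(2) b rep_eq by simp
  next
    fix x assume x: "x \<in> V"
    obtain t where xt: "(x, t) \<in> A\<^sup>*" and t: "terminal_vertex A t"
      using reaches_terminal_vertex[OF assms(1)] .
    have "rep t \<in> S" using t rtrancl_closed[OF assms(2) xt x] by (simp add: S_def)
    moreover have "(x, rep t) \<in> A\<^sup>*" using xt rep_mutual[of t] by (blast intro: rtrancl_trans)
    ultimately show "\<exists>s\<in>S. (x, s) \<in> A\<^sup>*" by blast
  qed
qed

theorem corollary23:
  fixes V :: "'a set" and A :: "('a \<times> 'a) set"
    and VH :: "'b set" and AH :: "('b \<times> 'b) set"
    and \<rho> :: "'a \<times> 'a \<Rightarrow> 'b" and k :: nat
  assumes "digraph V A" and "loopless A"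
    and "digraph VH AH"
    and "\<forall>a\<in>A. \<rho> a \<in> VH"
    and "quasi_transitive A"
    and "\<forall>xs. dcycle A xs \<and> length xs = 3 \<longrightarrow> H_cycle A AH \<rho> xs"
    and "2 \<le> k"
  shows "\<exists>S. kH_kernel V A AH \<rho> k S"
proof -
  have "finite A" "A \<subseteq> V \<times> V"
    using assms(1) finite_subset[of A "V \<times> V"] by (auto simp: digraph_def)
  then obtain S where "S \<subseteq> V"
    and independent: "\<And>u v. u \<in> S \<Longrightarrow> v \<in> S \<Longrightarrow> (u, v) \<in> A\<^sup>* \<Longrightarrow> u = v"
    and absorbing: "\<And>x. x \<in> V \<Longrightarrow> \<exists>s\<in>S. (x, s) \<in> A\<^sup>*"
    using reachability_kernel_exists by blast
  have no_path: "u = v" if "u \<in> S" "v \<in> S" "dpath A xs" "hd xs = u" "last xs = v" for u v xs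
    using that independent walk_imp_rtrancl by (metis dpath_iff_walk_distinct)
  have absorbed: "\<exists>xs. dpath A xs \<and> hd xs = x \<and> last xs \<in> S \<and> H_length_open AH \<rho> xs \<le> k - 1"
    if "x \<in> V" for x
  proof -
    obtain s where "s \<in> S" "(x, s) \<in> A\<^sup>*" using absorbing \<open>x \<in> V\<close> by blast
    moreover obtain xs where "dpath A xs" "hd xs = x" "last xs = s" "H_length_open AH \<rho> xs = 1"
      using rtrancl_imp_obstruction_free_path[OF assms(5,6) \<open>(x, s) \<in> A\<^sup>*\<close>] .
    ultimately show ?thesis using assms(7) by auto
  qed
  have "kH_kernel V A AH \<rho> k S"
    unfolding kH_kernel_def using \<open>S \<subseteq> V\<close> no_path absorbed by (meson DiffD1)
  then show ?thesis ..
qed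

end
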